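(* Let $(H,\mathcal F_\bullet H,\mathcal R)$ be a filtered Rota–Baxter Hopf algebra. Then $\mathcal R(P(H))\subset P(H)$ and $(P(H),\mathcal F_\bullet H\cap P(H),\mathcal R|_{P(H)})$ is a filtered Rota–Baxter Lie algebra, where $P(H)$ is the Lie algebra of primitive elements with the filtration $\mathcal F_nP(H)=\mathcal F_nH\cap P(H)$, $n\ge1$.
   Context: A filtered Hopf algebra is a Hopf algebra $H$ (over a field of characteristic zero) with subspaces $H=\mathcal F_0H\supset\mathcal F_1H\supset\cdots$ such that all Hopf structure maps preserve filtrations (with $\mathcal F_n(V\otimes W)=\sum_{i+j=n}\mathcal F_iV\otimes\mathcal F_jW$, $\mathcal F_0\mathbf k=\mathbf k$, $\mathcal F_n\mathbf k=0$ for $n\ge1$) and $\ker\epsilon=\mathcal F_1H$. A Rota–Baxter Hopf algebra is a cocommutative Hopf algebra $H$ with a coalgebra homomorphism $\mathcal R:H\to H$ with $\mathcal R(h)\mathcal R(t)=\mathcal R\big(h_{(1)}\mathcal R(h_{(2)})\,t\,S(\mathcal R(h_{(3)}))\big)$ for all $h,t\in H$; it is filtered if $H$ is a filtered Hopf algebra and $\mathcal R(\mathcal F_nH)\subset\mathcal F_nH$ for all $n\ge0$. $P(H)=\{x:\Delta(x)=x\otimes1+1\otimes x\}$ with the commutator bracket. A filtered Rota–Baxter Lie algebra is a Lie algebra $\mathfrak g$ with subspaces $\mathfrak g=\mathcal F_1\mathfrak g\supset\mathcal F_2\mathfrak g\supset\cdots$, $[\mathcal F_n\mathfrak g,\mathcal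 F_m\mathfrak g]\subset\mathcal F_{n+m}\mathfrak g$, together with a linear map $R$ satisfying $[R(x),R(y)]=R([R(x),y]+[x,R(y)]+[x,y])$ and $R(\mathcal F_n\mathfrak g)\subset\mathcal F_n\mathfrak g$. *)

theory Defs
  imports Main "HOL.Vector_Spaces"
begin

text \<open>
  A vector space over 'k is a type 'h (additive group) with a scalar
  multiplication s :: 'k => 'h => 'h satisfying vector_space s.
  A 'k-algebra is moreover a ring_1 whose multiplication is 'k-bilinear;
  the unit map is c |-> s c 1.

  Since the field is a parameter (not a type class), the
  tensor powers of H are modelled concretely inside the dual picture:
  an element of H (x) H is represented by the (bi)linear functional it induces
  on pairs of linear functionals (f, g) on H, i.e. a (x) b is
  (f, g) |-> f a * g b (and 0 on non-linear arguments).  Over a field this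
  is injective, so this is (isomorphic to) the tensor product; H (x) H is the
  set of finite sums of pure tensors.
\<close>

definition lfun :: "('k::field \<Rightarrow> 'h::ab_group_add \<Rightarrow> 'h) \<Rightarrow> ('h \<Rightarrow> 'k) \<Rightarrow> bool" where
  "lfun s f \<longleftrightarrow> Vector_Spaces.linear s (*) f"

type_synonym ('k, 'h) tensor2 = "('h \<Rightarrow> 'k) \<Rightarrow> ('h \<Rightarrow> 'k) \<Rightarrow> 'k"
type_synonym ('k, 'h) tensor3 = "('h \<Rightarrow> 'k) \<Rightarrow> ('h \<Rightarrow> 'k) \<Rightarrow> ('h \<Rightarrow> 'k) \<Rightarrow> 'k"

definition tens2 :: "('k::field \<Rightarrow> 'h::ab_group_add \<Rightarrow> 'h) \<Rightarrow> 'h \<Rightarrow> 'h \<Rightarrow> ('k, 'h) tensor2" where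
  "tens2 s a b = (\<lambda>f g. if lfun s f \<and> lfun s g then f a * g b else 0)"

definition tens3 :: "('k::field \<Rightarrow> 'h::ab_group_add \<Rightarrow> 'h) \<Rightarrow> 'h \<Rightarrow> 'h \<Rightarrow> 'h \<Rightarrow> ('k, 'h) tensor3" where
  "tens3 s a b c = (\<lambda>f g h. if lfun s f \<and> lfun s g \<and> lfun s h then f a * g b * h c else 0)"

definition tsum2 :: "('k::field \<Rightarrow> 'h::ab_group_add \<Rightarrow> 'h) \<Rightarrow> nat \<Rightarrow> (nat \<Rightarrow> 'h) \<Rightarrow> (nat \<Rightarrow> 'h) \<Rightarrow> ('k, 'h) tensor2" where
  "tsum2 s n a b = (\<lambda>f g. \<Sum>i<n. tens2 s (a i) (b i) f g)"

definition tsum3 :: "('k::field \<Rightarrow> 'h::ab_group_add \<Rightarrow> 'h) \<Rightarrow> nat \<Rightarrow> (nat \<Rightarrow> 'h) \<Rightarrow> (nat \<Rightarrow> 'h) \<Rightarrow> (nat \<Rightarrow> 'h) \<Rightarrow> ('k, 'h) tensor3" where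
  "tsum3 s n a b c = (\<lambda>f g h. \<Sum>i<n. tens3 s (a i) (b i) (c i) f g h)"

definition tensor2_space :: "('k::field \<Rightarrow> 'h::ab_group_add \<Rightarrow> 'h) \<Rightarrow> ('k, 'h) tensor2 set" where
  "tensor2_space s = {tsum2 s n a b | n a b. True}"

definition ttimes21 :: "('k::field \<Rightarrow> 'h::ab_group_add \<Rightarrow> 'h) \<Rightarrow> ('k, 'h) tensor2 \<Rightarrow> 'h \<Rightarrow> ('k, 'h) tensor3" where
  "ttimes21 s T b = (\<lambda>f g h. if lfun s h then T f g * h b else 0)"

definition ttimes12 :: "('k::field \<Rightarrow> 'h::ab_group_add \<Rightarrow> 'h) \<Rightarrow> 'h \<Rightarrow> ('k, 'h) tensor2 \<Rightarrow> ('k, 'h) tensor3" where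
  "ttimes12 s a T = (\<lambda>f g h. if lfun s f then f a * T g h else 0)"

definition kalgebra :: "('k::field \<Rightarrow> 'h::ring_1 \<Rightarrow> 'h) \<Rightarrow> bool" where
  "kalgebra s \<longleftrightarrow> vector_space s \<and>
     (\<forall>c x y. s c (x * y) = s c x * y \<and> s c (x * y) = x * s c y)"

text \<open>Hopf algebra (H, *, 1, Delta, eps, S) over k, written with Sweedler-type
  finite representations  Delta x = sum_i a_i (x) b_i.\<close>
definition hopf_algebra :: "('k::field \<Rightarrow> 'h::ring_1 \<Rightarrow> 'h) \<Rightarrow> ('h \<Rightarrow> ('k, 'h) tensor2) \<Rightarrow>
    ('h \<Rightarrow> 'k) \<Rightarrow> ('h \<Rightarrow> 'h) \<Rightarrow> bool" where
  "hopf_algebra s \<Delta> \<epsilon> S \<longleftrightarrow>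
     kalgebra s \<and>
     \<comment> \<open>Delta is a linear map H -> H (x) H\<close>
     (\<forall>x. \<Delta> x \<in> tensor2_space s) \<and>
     (\<forall>x y. \<Delta> (x + y) = (\<lambda>f g. \<Delta> x f g + \<Delta> y f g)) \<and>
     (\<forall>c x. \<Delta> (s c x) = (\<lambda>f g. c * \<Delta> x f g)) \<and>
     \<comment> \<open>eps and S are linear\<close>
     Vector_Spaces.linear s (*) \<epsilon> \<and>
     Vector_Spaces.linear s s S \<and>
     \<comment> \<open>coassociativity  (Delta (x) id) Delta = (id (x) Delta) Delta\<close>
     (\<forall>x n a b. \<Delta> x = tsum2 s n a b \<longrightarrow>
        (\<lambda>f g h. \<Sum>i<n. ttimes21 s (\<Delta> (a i)) (b i) f g h) =
        (\<lambda>f g h. \<Sum>i<n. ttimes12 s (a i) (\<Delta> (b i)) f g h)) \<and>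
     \<comment> \<open>counit\<close>
     (\<forall>x n a b. \<Delta> x = tsum2 s n a b \<longrightarrow>
        (\<Sum>i<n. s (\<epsilon> (a i)) (b i)) = x \<and> (\<Sum>i<n. s (\<epsilon> (b i)) (a i)) = x) \<and>
     \<comment> \<open>Delta and eps are algebra maps\<close>
     \<Delta> 1 = tens2 s 1 1 \<and>
     (\<forall>x y n a b m c d. \<Delta> x = tsum2 s n a b \<longrightarrow> \<Delta> y = tsum2 s m c d \<longrightarrow>
        \<Delta> (x * y) = (\<lambda>f g. \<Sum>i<n. \<Sum>j<m. tens2 s (a i * c j) (b i * d j) f g)) \<and>
     \<epsilon> 1 = 1 \<and> (\<forall>x y. \<epsilon> (x * y) = \<epsilon> x * \<epsilon> y) \<and>
     \<comment> \<open>antipode: m (S (x) id) Delta = eta eps = m (id (x) S) Delta\<close>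
     (\<forall>x n a b. \<Delta> x = tsum2 s n a b \<longrightarrow>
        (\<Sum>i<n. S (a i) * b i) = s (\<epsilon> x) 1 \<and> (\<Sum>i<n. a i * S (b i)) = s (\<epsilon> x) 1)"

definition cocommutative :: "('k::field \<Rightarrow> 'h::ring_1 \<Rightarrow> 'h) \<Rightarrow> ('h \<Rightarrow> ('k, 'h) tensor2) \<Rightarrow> bool" where
  "cocommutative s \<Delta> \<longleftrightarrow> (\<forall>x n a b. \<Delta> x = tsum2 s n a b \<longrightarrow> tsum2 s n b a = \<Delta> x)"

definition filt2 :: "('k::field \<Rightarrow> 'h::ab_group_add \<Rightarrow> 'h) \<Rightarrow> (nat \<Rightarrow> 'h set) \<Rightarrow> nat \<Rightarrow> ('k, 'h) tensor2 set" where
  "filt2 s F n = {tsum2 s m a b | m a b. \<forall>i<m. \<exists>p q. p + q = n \<and> a i \<in> F p \<and> b i \<in> F q}"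

text \<open>Preservation of the filtration by the
  multiplication H (x) H -> H is written out as F_i F_j in F_(i+j); by the unit
  it is automatic; by eps : H -> k (F_0 k = k, F_n k = 0 for n >= 1) it says
  eps(F_n H) = 0 for n >= 1.\<close>
definition filtered_hopf_algebra :: "('k::field \<Rightarrow> 'h::ring_1 \<Rightarrow> 'h) \<Rightarrow> ('h \<Rightarrow> ('k, 'h) tensor2) \<Rightarrow>
    ('h \<Rightarrow> 'k) \<Rightarrow> ('h \<Rightarrow> 'h) \<Rightarrow> (nat \<Rightarrow> 'h set) \<Rightarrow> bool" where
  "filtered_hopf_algebra s \<Delta> \<epsilon> S F \<longleftrightarrow>
     hopf_algebra s \<Delta> \<epsilon> S \<and>
     (\<forall>n. module.subspace s (F n)) \<and>
     F 0 = UNIV \<and> (\<forall>n. F (Suc n) \<subseteq> F n) \<and>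
     (\<forall>i j x y. x \<in> F i \<longrightarrow> y \<in> F j \<longrightarrow> x * y \<in> F (i + j)) \<and>
     (\<forall>n x. x \<in> F n \<longrightarrow> \<Delta> x \<in> filt2 s F n) \<and>
     (\<forall>n x. n \<ge> 1 \<longrightarrow> x \<in> F n \<longrightarrow> \<epsilon> x = 0) \<and>
     (\<forall>n x. x \<in> F n \<longrightarrow> S x \<in> F n) \<and>
     {x. \<epsilon> x = 0} = F 1"

text \<open>Rota-Baxter Hopf algebra (cocommutative H, coalgebra homomorphism R with
  R(h) R(t) = R(h_(1) R(h_(2)) t S(R(h_(3)))) ).  Here
  h_(1) (x) h_(2) (x) h_(3) = (Delta (x) id) Delta h, and the linear map
  a (x) b (x) c |-> a R(b) t S(R(c)) is evaluated on any representation.\<close>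
definition rota_baxter_hopf_algebra :: "('k::field \<Rightarrow> 'h::ring_1 \<Rightarrow> 'h) \<Rightarrow> ('h \<Rightarrow> ('k, 'h) tensor2) \<Rightarrow>
    ('h \<Rightarrow> 'k) \<Rightarrow> ('h \<Rightarrow> 'h) \<Rightarrow> ('h \<Rightarrow> 'h) \<Rightarrow> bool" where
  "rota_baxter_hopf_algebra s \<Delta> \<epsilon> S R \<longleftrightarrow>
     hopf_algebra s \<Delta> \<epsilon> S \<and> cocommutative s \<Delta> \<and>
     \<comment> \<open>R is a coalgebra homomorphism\<close>
     Vector_Spaces.linear s s R \<and>
     (\<forall>x n a b. \<Delta> x = tsum2 s n a b \<longrightarrow> \<Delta> (R x) = tsum2 s n (\<lambda>i. R (a i)) (\<lambda>i. R (b i))) \<and>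
     (\<forall>x. \<epsilon> (R x) = \<epsilon> x) \<and>
     \<comment> \<open>Rota-Baxter identity\<close>
     (\<forall>h t n a b m p q r. \<Delta> h = tsum2 s n a b \<longrightarrow>
        (\<lambda>f g k. \<Sum>i<n. ttimes21 s (\<Delta> (a i)) (b i) f g k) = tsum3 s m p q r \<longrightarrow>
        R h * R t = R (\<Sum>j<m. p j * R (q j) * t * S (R (r j))))"

definition filtered_rota_baxter_hopf_algebra :: "('k::field \<Rightarrow> 'h::ring_1 \<Rightarrow> 'h) \<Rightarrow> ('h \<Rightarrow> ('k, 'h) tensor2) \<Rightarrow>
    ('h \<Rightarrow> 'k) \<Rightarrow> ('h \<Rightarrow> 'h) \<Rightarrow> (nat \<Rightarrow> 'h set) \<Rightarrow> ('h \<Rightarrow> 'h) \<Rightarrow> bool" where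
  "filtered_rota_baxter_hopf_algebra s \<Delta> \<epsilon> S F R \<longleftrightarrow>
     rota_baxter_hopf_algebra s \<Delta> \<epsilon> S R \<and> filtered_hopf_algebra s \<Delta> \<epsilon> S F \<and>
     (\<forall>n x. x \<in> F n \<longrightarrow> R x \<in> F n)"

definition primitives :: "('k::field \<Rightarrow> 'h::ring_1 \<Rightarrow> 'h) \<Rightarrow> ('h \<Rightarrow> ('k, 'h) tensor2) \<Rightarrow> 'h set" where
  "primitives s \<Delta> = {x. \<Delta> x = (\<lambda>f g. tens2 s x 1 f g + tens2 s 1 x f g)}"

definition lie_algebra :: "('k::field \<Rightarrow> 'v::ab_group_add \<Rightarrow> 'v) \<Rightarrow> 'v set \<Rightarrow> ('v \<Rightarrow> 'v \<Rightarrow> 'v) \<Rightarrow> bool" where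
  "lie_algebra s g br \<longleftrightarrow>
     vector_space s \<and> module.subspace s g \<and>
     (\<forall>x\<in>g. \<forall>y\<in>g. br x y \<in> g) \<and>
     (\<forall>x\<in>g. \<forall>y\<in>g. \<forall>z\<in>g. br (x + y) z = br x z + br y z \<and> br z (x + y) = br z x + br z y) \<and>
     (\<forall>c. \<forall>x\<in>g. \<forall>y\<in>g. br (s c x) y = s c (br x y) \<and> br x (s c y) = s c (br x y)) \<and>
     (\<forall>x\<in>g. br x x = 0) \<and>
     (\<forall>x\<in>g. \<forall>y\<in>g. \<forall>z\<in>g. br x (br y z) + br y (br z x) + br z (br x y) = 0)"

definition filtered_rb_lie_algebra :: "('k::field \<Rightarrow> 'v::ab_group_add \<Rightarrow> 'v) \<Rightarrow> 'v set \<Rightarrow>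
    ('v \<Rightarrow> 'v \<Rightarrow> 'v) \<Rightarrow> (nat \<Rightarrow> 'v set) \<Rightarrow> ('v \<Rightarrow> 'v) \<Rightarrow> bool" where
  "filtered_rb_lie_algebra s g br Fg R \<longleftrightarrow>
     lie_algebra s g br \<and>
     (\<forall>n\<ge>1. module.subspace s (Fg n) \<and> Fg n \<subseteq> g) \<and>
     Fg 1 = g \<and> (\<forall>n\<ge>1. Fg (Suc n) \<subseteq> Fg n) \<and>
     (\<forall>n\<ge>1. \<forall>m\<ge>1. \<forall>x\<in>Fg n. \<forall>y\<in>Fg m. br x y \<in> Fg (n + m)) \<and>
     (\<forall>x\<in>g. R x \<in> g) \<and>
     (\<forall>x\<in>g. \<forall>y\<in>g. R (x + y) = R x + R y) \<and>
     (\<forall>c. \<forall>x\<in>g. R (s c x) = s c (R x)) \<and>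
     (\<forall>x\<in>g. \<forall>y\<in>g. br (R x) (R y) = R (br (R x) y + br x (R y) + br x y)) \<and>
     (\<forall>n\<ge>1. \<forall>x\<in>Fg n. R x \<in> Fg n)"

end

theory Submission
  imports Defs
begin

text \<open>
  A primitive element x has \<open>\<epsilon> x = 0\<close> and \<open>S x = -x\<close>, and the commutator of two
  primitives is primitive, so \<open>P(H)\<close> is a Lie subalgebra of \<open>ker \<epsilon> = F\<^sub>1 H\<close>.
  The element \<open>R 1\<close> is grouplike (R is a coalgebra map), hence invertible, and the
  Rota--Baxter identity for \<open>h = t = 1\<close> makes it idempotent, so \<open>R 1 = 1\<close>; consequently
  R maps primitives to primitives.  For primitive x the double coproduct is
  \<open>x \<otimes> 1 \<otimes> 1 + 1 \<otimes> x \<otimes> 1 + 1 \<otimes> 1 \<otimes> x\<close>, so the Rota--Baxter identity reads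
  \<open>R x R y = R (x y + R x y - y R x)\<close>; antisymmetrising in x and y gives the
  weight-one Rota--Baxter identity for the commutator bracket.
\<close>

lemma lie_algebra_commutator:
  assumes "kalgebra s" and "module.subspace s g"
    and "\<And>x y. x \<in> g \<Longrightarrow> y \<in> g \<Longrightarrow> x * y - y * x \<in> g"
  shows "lie_algebra s g (\<lambda>x y. x * y - y * x)"
proof -
  interpret vector_space s
    using assms(1) unfolding kalgebra_def by blast
  have "s c x * y = s c (x * y)" "x * s c y = s c (x * y)" for c x y
    using assms(1) unfolding kalgebra_def by metis+
  then show ?thesis
    using assms vector_space_axioms
    unfolding lie_algebra_def
    by (simp add: algebra_simps)
qed

lemma lfun_module_hom: "lfun s f \<Longrightarrow> module_hom s (*) f"
  unfolding lfun_def by (simp add: module_hom_iff_linear)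

lemmas lfun_zero = module_hom.zero[OF lfun_module_hom]
  and lfun_add = module_hom.add[OF lfun_module_hom]
  and lfun_scale = module_hom.scale[OF lfun_module_hom]
  and lfun_diff = module_hom.diff[OF lfun_module_hom]

lemma tens2_zero_left: "tens2 s 0 b f g = 0"
  and tens2_zero_right: "tens2 s a 0 f g = 0"
  by (auto simp: tens2_def lfun_zero)

lemma tens2_add_left: "tens2 s (a + a') b f g = tens2 s a b f g + tens2 s a' b f g"
  and tens2_add_right: "tens2 s a (b + b') f g = tens2 s a b f g + tens2 s a b' f g"
  by (auto simp: tens2_def lfun_add algebra_simps)

lemma tens2_diff_left: "tens2 s (a - a') b f g = tens2 s a b f g - tens2 s a' b f g"
  and tens2_diff_right: "tens2 s a (b - b') f g = tens2 s a b f g - tens2 s a b' f g"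
  by (auto simp: tens2_def lfun_diff algebra_simps)

lemma tens2_scale_left: "tens2 s (s c a) b f g = c * tens2 s a b f g"
  and tens2_scale_right: "tens2 s a (s c b) f g = c * tens2 s a b f g"
  by (auto simp: tens2_def lfun_scale algebra_simps)

lemma sum_lessThan_2: "(\<Sum>i<2. g i) = g 0 + g (1::nat)"
  by (simp add: numeral_2_eq_2)

lemma sum_lessThan_3: "(\<Sum>i<3. g i) = g 0 + g (1::nat) + g 2"
  by (simp add: numeral_3_eq_3 numeral_2_eq_2)

lemma filtered_hopf_algebraD:
  assumes "filtered_hopf_algebra s \<Delta> \<epsilon> S F"
  shows "module.subspace s (F n)" and "F (Suc n) \<subseteq> F n"
    and "x \<in> F i \<Longrightarrow> y \<in> F j \<Longrightarrow> x * y \<in> F (i + j)" and "F 1 = {x. \<epsilon> x = 0}"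
  using assms unfolding filtered_hopf_algebra_def by (elim conjE; blast)+

lemma filtered_rota_baxter_hopf_algebraD:
  assumes "filtered_rota_baxter_hopf_algebra s \<Delta> \<epsilon> S F R"
  shows "rota_baxter_hopf_algebra s \<Delta> \<epsilon> S R" and "filtered_hopf_algebra s \<Delta> \<epsilon> S F"
    and "x \<in> F n \<Longrightarrow> R x \<in> F n"
  using assms unfolding filtered_rota_baxter_hopf_algebra_def by blast+

locale hopf =
  fixes s :: "'k::field \<Rightarrow> 'h::ring_1 \<Rightarrow> 'h"
    and \<Delta> :: "'h \<Rightarrow> ('k, 'h) tensor2"
    and \<epsilon> :: "'h \<Rightarrow> 'k"
    and S :: "'h \<Rightarrow> 'h"
  assumes hopf_algebra: "hopf_algebra s \<Delta> \<epsilon> S"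
begin

lemma kalgebra: "kalgebra s"
  using hopf_algebra unfolding hopf_algebra_def by blast

sublocale vector_space s
  using kalgebra unfolding kalgebra_def by blast

sublocale counit: module_hom s "(*)" \<epsilon>
  using hopf_algebra unfolding hopf_algebra_def by (simp add: module_hom_iff_linear)

lemma comult_add: "\<Delta> (x + y) = (\<lambda>f g. \<Delta> x f g + \<Delta> y f g)"
  using hopf_algebra unfolding hopf_algebra_def by auto

lemma comult_scale: "\<Delta> (s c x) = (\<lambda>f g. c * \<Delta> x f g)"
  using hopf_algebra unfolding hopf_algebra_def by auto

lemma comult_one: "\<Delta> 1 = tens2 s 1 1"
  using hopf_algebra unfolding hopf_algebra_def by blast

lemma comult_mult:
  "\<Delta> x = tsum2 s n a b \<Longrightarrow> \<Delta> y = tsum2 s m c d \<Longrightarrow>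
     \<Delta> (x * y) = (\<lambda>f g. \<Sum>i<n. \<Sum>j<m. tens2 s (a i * c j) (b i * d j) f g)"
  using hopf_algebra unfolding hopf_algebra_def by blast

lemma counit_one: "\<epsilon> 1 = 1"
  using hopf_algebra unfolding hopf_algebra_def by blast

lemma counit_law:
  "\<Delta> x = tsum2 s n a b \<Longrightarrow> (\<Sum>i<n. s (\<epsilon> (a i)) (b i)) = x \<and> (\<Sum>i<n. s (\<epsilon> (b i)) (a i)) = x"
  using hopf_algebra unfolding hopf_algebra_def by blast

lemma antipode_law:
  "\<Delta> x = tsum2 s n a b \<Longrightarrow>
     (\<Sum>i<n. S (a i) * b i) = s (\<epsilon> x) 1 \<and> (\<Sum>i<n. a i * S (b i)) = s (\<epsilon> x) 1"
  using hopf_algebra unfolding hopf_algebra_def by blast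

lemma comult_diff: "\<Delta> (x - y) f g = \<Delta> x f g - \<Delta> y f g"
  using comult_add[of "x - y" y] by (simp add: fun_eq_iff eq_diff_eq)

lemma comult_zero: "\<Delta> 0 f g = 0"
  using comult_diff[of 0 0] by simp

lemma primitive_iff_comult:
  "x \<in> primitives s \<Delta> \<longleftrightarrow> \<Delta> x = tsum2 s 2 ((!) [x, 1]) ((!) [1, x])"
  unfolding primitives_def tsum2_def by (simp add: sum_lessThan_2)

lemma counit_primitive:
  assumes "x \<in> primitives s \<Delta>"
  shows "\<epsilon> x = 0"
proof -
  have "s (\<epsilon> 1) x + s (\<epsilon> x) 1 = x"
    using counit_law[OF assms[unfolded primitive_iff_comult]] by (simp add: sum_lessThan_2)
  then have "\<epsilon> x + \<epsilon> x = \<epsilon> x"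
    by (metis counit.add counit.scale counit_one mult_1 mult.commute)
  then show ?thesis by (simp only: add_cancel_left_right)
qed

lemma antipode_one: "S 1 = 1"
  using antipode_law[of 1 1 "\<lambda>_. 1" "\<lambda>_. 1"] by (simp add: comult_one tsum2_def counit_one)

lemma antipode_primitive:
  assumes "x \<in> primitives s \<Delta>"
  shows "S x = - x"
proof -
  have "S x + x = 0"
    using antipode_law[OF assms[unfolded primitive_iff_comult]] counit_primitive[OF assms]
    by (simp add: sum_lessThan_2 antipode_one)
  then show ?thesis by (simp add: eq_neg_iff_add_eq_0)
qed

lemma subspace_primitives: "subspace (primitives s \<Delta>)"
  unfolding subspace_def primitives_def
  by (simp add: comult_zero comult_add comult_scale tens2_zero_left tens2_zero_right
      tens2_add_left tens2_add_right tens2_scale_left tens2_scale_right fun_eq_iff algebra_simps)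

lemma commutator_primitive:
  assumes "x \<in> primitives s \<Delta>" and "y \<in> primitives s \<Delta>"
  shows "x * y - y * x \<in> primitives s \<Delta>"
proof -
  note comult_prim = assms[unfolded primitive_iff_comult]
  have "\<Delta> (x * y) f g - \<Delta> (y * x) f g = tens2 s (x * y - y * x) 1 f g + tens2 s 1 (x * y - y * x) f g"
    for f g
    unfolding comult_mult[OF comult_prim] comult_mult[OF comult_prim(2,1)]
    by (simp add: sum_lessThan_2 tens2_diff_left tens2_diff_right)
  then show ?thesis
    unfolding primitives_def by (simp add: comult_diff fun_eq_iff)
qed

lemma primitives_subset_filtration_one:
  assumes "filtered_hopf_algebra s \<Delta> \<epsilon> S F"
  shows "primitives s \<Delta> \<subseteq> F 1"
  using filtered_hopf_algebraD(4)[OF assms] counit_primitive by blast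

lemma commutator_mem_filtration:
  assumes "filtered_hopf_algebra s \<Delta> \<epsilon> S F" and "x \<in> F i" and "y \<in> F j"
  shows "x * y - y * x \<in> F (i + j)"
  using filtered_hopf_algebraD[OF assms(1)] assms(2,3) by (metis subspace_diff add.commute)

lemma antipode_grouplike:
  assumes "\<Delta> g = tens2 s g g"
  shows "S g * g = s (\<epsilon> g) 1" and "g * S g = s (\<epsilon> g) 1"
  using antipode_law[of g 1 "\<lambda>_. g" "\<lambda>_. g"] assms by (simp_all add: tsum2_def)

end

locale rota_baxter_hopf =
  fixes s :: "'k::field \<Rightarrow> 'h::ring_1 \<Rightarrow> 'h"
    and \<Delta> :: "'h \<Rightarrow> ('k, 'h) tensor2"
    and \<epsilon> :: "'h \<Rightarrow> 'k"
    and S :: "'h \<Rightarrow> 'h"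
    and R :: "'h \<Rightarrow> 'h"
  assumes rota_baxter_hopf_algebra: "rota_baxter_hopf_algebra s \<Delta> \<epsilon> S R"
begin

sublocale hopf s \<Delta> \<epsilon> S
  using rota_baxter_hopf_algebra unfolding rota_baxter_hopf_algebra_def hopf_def by blast

sublocale R: module_hom s s R
  using rota_baxter_hopf_algebra unfolding rota_baxter_hopf_algebra_def
  by (simp add: module_hom_iff_linear)

lemma comult_R: "\<Delta> x = tsum2 s n a b \<Longrightarrow> \<Delta> (R x) = tsum2 s n (\<lambda>i. R (a i)) (\<lambda>i. R (b i))"
  using rota_baxter_hopf_algebra unfolding rota_baxter_hopf_algebra_def by blast

lemma counit_R: "\<epsilon> (R x) = \<epsilon> x"
  using rota_baxter_hopf_algebra unfolding rota_baxter_hopf_algebra_def by blast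

lemma rota_baxter_identity:
  "\<Delta> h = tsum2 s n a b \<Longrightarrow>
     (\<lambda>f g k. \<Sum>i<n. ttimes21 s (\<Delta> (a i)) (b i) f g k) = tsum3 s m p q r \<Longrightarrow>
     R h * R t = R (\<Sum>j<m. p j * R (q j) * t * S (R (r j)))"
  using rota_baxter_hopf_algebra unfolding rota_baxter_hopf_algebra_def by blast

lemma R_one: "R 1 = 1"
proof -
  have comult_one': "\<Delta> 1 = tsum2 s 1 (\<lambda>_. 1) (\<lambda>_. 1)"
    by (simp add: comult_one tsum2_def)
  have "\<Delta> (R 1) = tens2 s (R 1) (R 1)"
    using comult_R[OF comult_one'] by (simp add: tsum2_def)
  then have left_inv: "S (R 1) * R 1 = 1" and right_inv: "R 1 * S (R 1) = 1"
    using antipode_grouplike by (simp_all add: counit_R counit_one)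
  have "(\<lambda>f g k. \<Sum>i<1::nat. ttimes21 s (\<Delta> 1) 1 f g k) = tsum3 s 1 (\<lambda>_. 1) (\<lambda>_. 1) (\<lambda>_. 1)"
    by (auto simp: ttimes21_def tsum3_def tens3_def comult_one tens2_def intro!: ext)
  then have "R 1 * R 1 = R (1 * R 1 * 1 * S (R 1))"
    using rota_baxter_identity[OF comult_one'] by simp
  then have "R 1 * R 1 = R 1"
    using right_inv by simp
  then have "S (R 1) * R 1 * R 1 = S (R 1) * R 1"
    by (simp add: mult.assoc)
  then show ?thesis
    using left_inv by simp
qed

lemma R_primitive:
  assumes "x \<in> primitives s \<Delta>"
  shows "R x \<in> primitives s \<Delta>"
  using comult_R[OF assms[unfolded primitive_iff_comult]]
  unfolding primitive_iff_comult tsum2_def by (simp add: sum_lessThan_2 R_one)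

lemma iterated_comult_primitive:
  assumes "x \<in> primitives s \<Delta>"
  shows "(\<lambda>f g k. \<Sum>i<2. ttimes21 s (\<Delta> ([x, 1] ! i)) ([1, x] ! i) f g k) =
         tsum3 s 3 ((!) [x, 1, 1]) ((!) [1, x, 1]) ((!) [1, 1, x])"
proof (intro ext)
  fix f g k
  show "(\<Sum>i<2. ttimes21 s (\<Delta> ([x, 1] ! i)) ([1, x] ! i) f g k) =
        tsum3 s 3 ((!) [x, 1, 1]) ((!) [1, x, 1]) ((!) [1, 1, x]) f g k"
    using assms unfolding primitives_def
    by (cases "lfun s f \<and> lfun s g \<and> lfun s k")
      (auto simp: sum_lessThan_2 sum_lessThan_3 ttimes21_def tsum3_def tens3_def comult_one
        tens2_def distrib_right)
qed

lemma R_mult_primitive: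
  assumes "x \<in> primitives s \<Delta>"
  shows "R x * R y = R (x * y + R x * y - y * R x)"
  using rota_baxter_identity[OF assms[unfolded primitive_iff_comult] iterated_comult_primitive[OF assms]]
  by (simp add: sum_lessThan_3 R_one antipode_one antipode_primitive[OF R_primitive[OF assms]])

lemma rota_baxter_commutator:
  assumes "x \<in> primitives s \<Delta>" and "y \<in> primitives s \<Delta>"
  shows "R x * R y - R y * R x = R ((R x * y - y * R x) + (x * R y - R y * x) + (x * y - y * x))"
proof -
  have "R x * R y - R y * R x = R (x * y + R x * y - y * R x) - R (y * x + R y * x - x * R y)"
    using R_mult_primitive assms by simp
  also have "\<dots> = R ((R x * y - y * R x) + (x * R y - R y * x) + (x * y - y * x))"
    unfolding R.diff[symmetric] by (simp add: algebra_simps)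
  finally show ?thesis .
qed

end

theorem proposition4p7:
  fixes s :: "'k::field_char_0 \<Rightarrow> 'h::ring_1 \<Rightarrow> 'h"
    and \<Delta> :: "'h \<Rightarrow> ('k, 'h) tensor2"
    and \<epsilon> :: "'h \<Rightarrow> 'k"
    and S :: "'h \<Rightarrow> 'h"
    and F :: "nat \<Rightarrow> 'h set"
    and R :: "'h \<Rightarrow> 'h"
  assumes "filtered_rota_baxter_hopf_algebra s \<Delta> \<epsilon> S F R"
  shows "R ` primitives s \<Delta> \<subseteq> primitives s \<Delta> \<and>
         filtered_rb_lie_algebra s (primitives s \<Delta>) (\<lambda>x y. x * y - y * x)
           (\<lambda>n. F n \<inter> primitives s \<Delta>) R"
proof -
  note filtered = filtered_rota_baxter_hopf_algebraD[OF assms]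
  interpret rota_baxter_hopf s \<Delta> \<epsilon> S R
    by unfold_locales (fact filtered(1))
  have "lie_algebra s (primitives s \<Delta>) (\<lambda>x y. x * y - y * x)"
    using lie_algebra_commutator[OF kalgebra subspace_primitives commutator_primitive] .
  then show ?thesis
    unfolding filtered_rb_lie_algebra_def
    using filtered_hopf_algebraD(1,2)[OF filtered(2)] filtered(3)
      primitives_subset_filtration_one[OF filtered(2)] commutator_mem_filtration[OF filtered(2)]
      R_primitive commutator_primitive rota_baxter_commutator
    by (auto simp: subspace_primitives subspace_inter R.add R.scale)
qed

end
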